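(* Let $R$ be an associative ring with identity and involution $*$, and let $a\in R^{\#}\cap R^{\dagger}$. Then $a\in R^{SEP}$ if and only if $a(a^{\#})^*a^{\dagger}a^{\#}$ is a projection, i.e. $a(a^{\#})^*a^{\dagger}a^{\#}\in PE(R)$.
   Context: An involution on $R$ is a map $x\mapsto x^*$ with $(x^* )^*=x$, $(x+y)^*=x^*+y^*$, $(xy)^*=y^*x^*$. An element $a$ is Moore–Penrose invertible if there is $b$ with $aba=a$, $bab=b$, $(ab)^*=ab$, $(ba)^*=ba$; such $b$ is unique, denoted $a^{\dagger}$, and $R^{\dagger}$ is the set of such $a$. An element $a$ is group invertible if there is $b$ with $aba=a$, $bab=b$, $ab=ba$; such $b$ is unique, denoted $a^{\#}$, and $R^{\#}$ is the set of such $a$. $PE(R)=\{e\in R: e^2=e=e^*\}$ is the set of projections. For $a\in R^{\#}\cap R^{\dagger}$: $a$ is EP if $a^{\#}=a^{\dagger}$; $a$ is a partial isometry if $a^*=a^{\dagger}$; $a$ is SEP (strongly EP) if $a^*=a^{\dagger}=a^{\#}$. $R^{SEP}$ denotes the set of SEP elements. *)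

theory Defs
  imports Main
begin

definition involution :: "('a::ring_1 \<Rightarrow> 'a) \<Rightarrow> bool" where
  "involution s \<longleftrightarrow> (\<forall>x. s (s x) = x) \<and> (\<forall>x y. s (x + y) = s x + s y)
     \<and> (\<forall>x y. s (x * y) = s y * s x)"

definition is_mp_inverse :: "('a::ring_1 \<Rightarrow> 'a) \<Rightarrow> 'a \<Rightarrow> 'a \<Rightarrow> bool" where
  "is_mp_inverse s a b \<longleftrightarrow> a * b * a = a \<and> b * a * b = b \<and> s (a * b) = a * b \<and> s (b * a) = b * a"

definition mp_invertible :: "('a::ring_1 \<Rightarrow> 'a) \<Rightarrow> 'a \<Rightarrow> bool" where
  "mp_invertible s a \<longleftrightarrow> (\<exists>b. is_mp_inverse s a b)"

definition mp_inv :: "('a::ring_1 \<Rightarrow> 'a) \<Rightarrow> 'a \<Rightarrow> 'a" where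
  "mp_inv s a = (THE b. is_mp_inverse s a b)"

definition is_group_inverse :: "'a::ring_1 \<Rightarrow> 'a \<Rightarrow> bool" where
  "is_group_inverse a b \<longleftrightarrow> a * b * a = a \<and> b * a * b = b \<and> a * b = b * a"

definition group_invertible :: "'a::ring_1 \<Rightarrow> bool" where
  "group_invertible a \<longleftrightarrow> (\<exists>b. is_group_inverse a b)"

definition group_inv :: "'a::ring_1 \<Rightarrow> 'a" where
  "group_inv a = (THE b. is_group_inverse a b)"

definition projection :: "('a::ring_1 \<Rightarrow> 'a) \<Rightarrow> 'a \<Rightarrow> bool" where
  "projection s e \<longleftrightarrow> e * e = e \<and> e = s e"

definition SEP :: "('a::ring_1 \<Rightarrow> 'a) \<Rightarrow> 'a \<Rightarrow> bool" where
  "SEP s a \<longleftrightarrow> group_invertible a \<and> mp_invertible s a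
     \<and> s a = mp_inv s a \<and> mp_inv s a = group_inv a"

end

theory Submission
  imports Defs
begin

text \<open>Write \<open>g = a\<^sup>#\<close>, \<open>m = a\<^sup>\<dagger>\<close> and \<open>e = a g\<^sup>* m g\<close>. If \<open>e\<close> is a projection, then
  \<open>e = e (a m)\<close> by self-adjointness, while \<open>e (a a a\<^sup>* m) = a m\<close>; hence \<open>a m = e (a m) = e\<close>. As \<open>e\<close>
  ends in \<open>g\<close>, also \<open>e = e (a g) = a g\<close>, so \<open>a a\<^sup># = a a\<^sup>\<dagger>\<close> is self-adjoint and \<open>a\<close> is EP, i.e.
  \<open>m = g\<close>. Now \<open>e = a g\<^sup>* g g = a g\<close> gives \<open>a = a g\<^sup>* g\<close>, from which \<open>g\<^sup>* = a\<close>. The converse is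
  a direct computation: for SEP \<open>a\<close> the element \<open>e\<close> collapses to \<open>a a\<^sup>\<dagger>\<close>.\<close>

lemma involution_involutive: "involution s \<Longrightarrow> s (s x) = x"
  unfolding involution_def by blast

lemma involution_mult: "involution s \<Longrightarrow> s (x * y) = s y * s x"
  unfolding involution_def by blast

lemma is_mp_inverse_unique:
  assumes inv: "involution s" and b: "is_mp_inverse s a b" and c: "is_mp_inverse s a c"
  shows "b = c"
proof -
  note sm = involution_mult[OF inv]
  from b have b1: "a*b*a = a" "b*a*b = b" "s (a*b) = a*b" "s (b*a) = b*a"
    unfolding is_mp_inverse_def by auto
  from c have c1: "a*c*a = a" "c*a*c = c" "s (a*c) = a*c" "s (c*a) = c*a"
    unfolding is_mp_inverse_def by auto
  have "b = b * s (a*b)" using b1 by (simp add: mult.assoc)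
  also have "\<dots> = b * s b * s (a*c*a)" using c1 by (simp add: sm mult.assoc)
  also have "\<dots> = b * s (a*b) * s (a*c)" by (simp add: sm mult.assoc)
  also have "\<dots> = b * a * c" using b1 c1 by (simp add: mult.assoc)
  finally have b_eq: "b = b * a * c" .
  have "c = s (c*a) * c" using c1 by (simp add: mult.assoc)
  also have "\<dots> = s (a*b*a) * s c * c" using b1 by (simp add: sm)
  also have "\<dots> = s (b*a) * s (c*a) * c" by (simp add: sm mult.assoc)
  also have "\<dots> = b * a * c" using b1 c1 by (simp add: mult.assoc)
  finally show ?thesis using b_eq by simp
qed

lemma mp_inv_eqI: "involution s \<Longrightarrow> is_mp_inverse s a b \<Longrightarrow> mp_inv s a = b"
  unfolding mp_inv_def by (blast intro: is_mp_inverse_unique)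

lemma is_mp_inverse_mp_inv:
  "involution s \<Longrightarrow> mp_invertible s a \<Longrightarrow> is_mp_inverse s a (mp_inv s a)"
  unfolding mp_invertible_def using mp_inv_eqI by blast

lemma is_group_inverse_unique:
  assumes b: "is_group_inverse a b" and c: "is_group_inverse a c"
  shows "b = c"
proof -
  from b have b1: "a*b*a = a" "b*a*b = b" "a*b = b*a"
    unfolding is_group_inverse_def by auto
  from c have c1: "a*c*a = a" "c*a*c = c" "a*c = c*a"
    unfolding is_group_inverse_def by auto
  have aab: "a*a*b = a" using b1 by (metis mult.assoc)
  have ab: "a*b = a*c"
  proof -
    have "a*b = c*(a*a*b)" using c1 by (metis mult.assoc)
    then show ?thesis using aab c1 by simp
  qed
  have "b = b*a*c" using b1 ab by (metis mult.assoc)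
  also have "\<dots> = c" using b1 c1 by (metis mult.assoc)
  finally show ?thesis .
qed

lemma group_inv_eqI: "is_group_inverse a b \<Longrightarrow> group_inv a = b"
  unfolding group_inv_def by (blast intro: is_group_inverse_unique)

lemma is_group_inverse_group_inv: "group_invertible a \<Longrightarrow> is_group_inverse a (group_inv a)"
  unfolding group_invertible_def using group_inv_eqI by blast

lemma is_mp_inverse_if_group_inverse:
  "is_group_inverse a g \<Longrightarrow> s (a * g) = a * g \<Longrightarrow> is_mp_inverse s a g"
  unfolding is_group_inverse_def is_mp_inverse_def by metis

lemma mp_inverse_absorbs_star:
  assumes inv: "involution s" and m: "is_mp_inverse s a m" and "a * y = a"
  shows "s y * m = m"
proof -
  have M: "m*a*m = m" "s (m*a) = m*a" using m unfolding is_mp_inverse_def by auto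
  have "s y * m = s y * s (m*a) * m" using M by (simp add: mult.assoc)
  also have "\<dots> = s (m*a*y) * m" by (simp add: involution_mult[OF inv])
  also have "\<dots> = m" using M \<open>a * y = a\<close> by (simp add: mult.assoc)
  finally show ?thesis .
qed

lemma star_eq_mp_inverse_mult_star:
  assumes inv: "involution s" and m: "is_mp_inverse s a m"
  shows "s a = m * a * s a"
proof -
  have M: "a*m*a = a" "s (m*a) = m*a" using m unfolding is_mp_inverse_def by auto
  have "s a = s (a*(m*a))" using M by (simp add: mult.assoc)
  then show ?thesis using M by (simp add: involution_mult[OF inv])
qed

lemma projection_mult_mp_inverse: "is_mp_inverse s a m \<Longrightarrow> projection s (a * m)"
  unfolding is_mp_inverse_def projection_def by (metis mult.assoc)

lemma projection_eq_range_projection: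
  assumes inv: "involution s" and g: "is_group_inverse a g" and m: "is_mp_inverse s a m"
    and e: "projection s (a * s g * m * g)"
  shows "a * s g * m * g = a * m"
proof -
  note sm = involution_mult[OF inv]
  define e where "e = a * s g * m * g"
  have ee: "e * e = e" "s e = e" using e unfolding projection_def e_def by auto
  have M: "a*m*a = a" "s (a*m) = a*m" using m unfolding is_mp_inverse_def by auto
  have G: "a*g*a = a" "a*g = g*a" using g unfolding is_group_inverse_def by auto
  have gaa: "g*a*a = a" using G by metis
  have aag: "a*(a*g) = a" using G by (metis mult.assoc)
  have "a*m*e = e" unfolding e_def using M(1) by (metis mult.assoc)
  then have "e = s (a*m*e)" using ee by simp
  also have "\<dots> = e * (a*m)" by (simp only: sm[of "a*m" e] ee M)
  finally have e_right: "e = e * (a*m)" .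
  have "e * (a*a*s a*m) = a * s g * m * (g*a*a) * s a * m"
    by (simp add: e_def mult.assoc)
  also have "\<dots> = a * s g * (m * a * s a) * m" using gaa by (simp add: mult.assoc)
  also have "\<dots> = a * (s g * s a) * m"
    using star_eq_mp_inverse_mult_star[OF inv m] by (simp add: mult.assoc)
  also have "\<dots> = a * (s (a*g) * m)" by (simp add: sm mult.assoc)
  also have "\<dots> = a * m" using mp_inverse_absorbs_star[OF inv m aag] by simp
  finally have key: "e * (a*a*s a*m) = a * m" .
  have "a * m = (e * e) * (a*a*s a*m)" using key ee by simp
  also have "\<dots> = e * (a * m)" using key by (simp add: mult.assoc)
  finally show ?thesis using e_right by (simp add: e_def)
qed

lemma range_projections_eq_if_projection:
  assumes inv: "involution s" and g: "is_group_inverse a g" and m: "is_mp_inverse s a m"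
    and e: "projection s (a * s g * m * g)"
  shows "a * m = a * g"
proof -
  note e_am = projection_eq_range_projection[OF inv g m e]
  have "a * m = a * s g * m * (g * a * g)" using e_am g unfolding is_group_inverse_def by simp
  also have "\<dots> = (a * s g * m * g) * (a * g)" by (simp add: mult.assoc)
  also have "\<dots> = (a * m * a) * g" using e_am by (simp add: mult.assoc)
  finally show ?thesis using m unfolding is_mp_inverse_def by simp
qed

lemma star_group_inverse_eq_if_ep:
  assumes inv: "involution s" and g: "is_group_inverse a g" and ag: "s (a*g) = a*g"
    and e: "a * s g * g * g = a * g"
  shows "s g = a"
proof -
  note sm = involution_mult[OF inv]
  have G: "a*g*a = a" "g*a*g = g" "a*g = g*a" using g unfolding is_group_inverse_def by auto
  have gga: "g*g*a = g" using G by (metis mult.assoc)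
  have gaa: "g*a*a = a" using G by metis
  have "a * s g * g = a * s g * (g*g*a)" using gga by simp
  also have "\<dots> = (a * s g * g * g) * a" by (simp add: mult.assoc)
  also have "\<dots> = a" using e G by simp
  finally have a_eq: "a * s g * g = a" .
  have "s g = s (g*(a*g))" using G by (simp add: mult.assoc)
  then have left: "s g = a * g * s g" using ag by (simp add: sm)
  have ga_herm: "s (g*a) = g*a" using ag G by simp
  have "s g = s ((g*a)*g)" using G by simp
  then have right: "s g = s g * (g*a)" using ga_herm by (simp only: sm)
  have "g * a = (g * a) * s g * g" using a_eq by (simp add: mult.assoc)
  also have "\<dots> = s g * g" using G left by simp
  finally have ga: "g * a = s g * g" .
  have "s g = (s g * g) * a" using right by (simp add: mult.assoc)
  also have "\<dots> = a" using ga gaa by simp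
  finally show ?thesis .
qed

theorem theorem2p1:
  fixes s :: "'a::ring_1 \<Rightarrow> 'a" and a :: 'a
  assumes "involution s"
    and "group_invertible a" and "mp_invertible s a"
  shows "SEP s a \<longleftrightarrow>
         projection s (a * s (group_inv a) * mp_inv s a * group_inv a)"
proof -
  define g m where "g = group_inv a" and "m = mp_inv s a"
  have g: "is_group_inverse a g" using is_group_inverse_group_inv[OF assms(2)] by (simp add: g_def)
  have m: "is_mp_inverse s a m" using is_mp_inverse_mp_inv[OF assms(1,3)] by (simp add: m_def)
  have "projection s (a * s g * m * g) \<longleftrightarrow> s a = m \<and> m = g"
  proof
    assume e: "projection s (a * s g * m * g)"
    have am_ag: "a * m = a * g" using range_projections_eq_if_projection[OF assms(1) g m e] .
    then have ag: "s (a * g) = a * g" using m unfolding is_mp_inverse_def by simp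
    then have mg: "m = g"
      using mp_inv_eqI[OF assms(1) is_mp_inverse_if_group_inverse[OF g]] by (simp add: m_def)
    have "a * s g * g * g = a * g"
      using projection_eq_range_projection[OF assms(1) g m e] am_ag mg by simp
    then have "s g = a" using star_group_inverse_eq_if_ep[OF assms(1) g ag] by simp
    then show "s a = m \<and> m = g" using mg involution_involutive[OF assms(1)] by metis
  next
    assume "s a = m \<and> m = g"
    then have "s g = a" and "m = g" using involution_involutive[OF assms(1)] by metis+
    then have "a * s g * m * g = (a * a * g) * g" by simp
    also have "\<dots> = a * m" using g \<open>m = g\<close> unfolding is_group_inverse_def by (metis mult.assoc)
    finally show "projection s (a * s g * m * g)" using projection_mult_mp_inverse[OF m] by simp
  qed
  then show ?thesis using assms(2,3) unfolding SEP_def g_def m_def by blast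
qed

end
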